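(* Let $r>0$, $\tau>0$, $\kappa>0$, $p\in[0,1]$ and $\varepsilon=pe^{-\tau}$. Let $\psi=(\psi_S,\psi_I,\psi_Q):[-\tau-\kappa,0]\to\mathbb{R}^3$ be a piecewise continuous function with values in the simplex $\Delta^2=\{u\in\mathbb{R}^3: u_1+u_2+u_3=1,\ u_i\ge 0\}$, and assume \[ \psi_I(0)\ \ge\ rp\int_{-\tau}^{0}e^{\theta}\psi_S(\theta)\psi_I(\theta)\,d\theta,\qquad \psi_Q(0)\ \ge\ r\varepsilon\int_{-\tau-\kappa}^{0}\psi_S(\theta)\psi_I(\theta)\,d\theta . \] Let $x(t;\psi)=(S(t),I(t),Q(t))$, $t\ge 0$, be the solution of the SIQ system with initial history $\psi$. Then $S(t),I(t),Q(t)\ge 0$ and $S(t)+I(t)+Q(t)=1$ for all $t\ge 0$, and $x_t(\psi)\in\tilde{\mathcal{C}}$ for all $t\ge\tau+\kappa$. In particular, if in addition $\psi\in\tilde{\mathcal{C}}$ (i.e. $\psi$ is continuous), then $x_t(\psi)\in\tilde{\mathcal{C}}$ for all $t\ge 0$.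
   Context: The SIQ system is the system of delay differential equations \[ \dot S(t)=-rS(t)I(t)+I(t)+r\varepsilon S(t-\tau-\kappa)I(t-\tau-\kappa),\quad \dot I(t)=rS(t)I(t)-I(t)-r\varepsilon S(t-\tau)I(t-\tau), \] \[ \dot Q(t)=r\varepsilon\big[S(t-\tau)I(t-\tau)-S(t-\tau-\kappa)I(t-\tau-\kappa)\big], \] with parameters $r>0,\tau>0,\kappa>0,p\in[0,1]$, $\varepsilon=pe^{-\tau}$. Given an initial history $\psi$ on $[-\tau-\kappa,0]$, $x(t;\psi)$ denotes the solution for $t\ge0$ with $x(\theta;\psi)=\psi(\theta)$ for $\theta\in[-\tau-\kappa,0]$, and $x_t(\psi)(\theta)=x(t+\theta;\psi)$, $\theta\in[-\tau-\kappa,0]$. $\tilde{\mathcal{C}}$ denotes the set of continuous functions $\phi:[-\tau-\kappa,0]\to\mathbb{R}^3$ with $\phi(\theta)\in\Delta^2$ for all $\theta$. *)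

theory Defs
  imports "HOL-Analysis.Analysis"
begin

definition in_simplex :: "real \<times> real \<times> real \<Rightarrow> bool" where
  "in_simplex u \<longleftrightarrow> fst u \<ge> 0 \<and> fst (snd u) \<ge> 0 \<and> snd (snd u) \<ge> 0
      \<and> fst u + fst (snd u) + snd (snd u) = 1"

definition piecewise_continuous_on ::
  "real \<Rightarrow> real \<Rightarrow> (real \<Rightarrow> 'a::topological_space) \<Rightarrow> bool" where
  "piecewise_continuous_on a b f \<longleftrightarrow>
     (\<exists>D. finite D \<and>
        (\<forall>x\<in>{a..b} - D. continuous (at x within {a..b}) f) \<and>
        (\<forall>d\<in>D \<inter> {a..b}.
           (a < d \<longrightarrow> (\<exists>l. (f \<longlongrightarrow> l) (at_left d))) \<and>
           (d < b \<longrightarrow> (\<exists>l. (f \<longlongrightarrow> l) (at_right d)))))"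

definition Ctilde :: "real \<Rightarrow> real \<Rightarrow> (real \<Rightarrow> real \<times> real \<times> real) \<Rightarrow> bool" where
  "Ctilde \<tau> \<kappa> \<phi> \<longleftrightarrow> continuous_on {-\<tau>-\<kappa>..0} \<phi> \<and> (\<forall>\<theta>\<in>{-\<tau>-\<kappa>..0}. in_simplex (\<phi> \<theta>))"

text \<open>Solution of the SIQ system with initial history psi (in integral/Caratheodory sense,
  since psi is only piecewise continuous): x = psi on [-tau-kappa,0], x continuous on [0,oo),
  and x(t) = x(0) + integral of the right-hand side over [0,t] for t >= 0.\<close>

definition SIQ_solution ::
  "real \<Rightarrow> real \<Rightarrow> real \<Rightarrow> real \<Rightarrow> (real \<Rightarrow> real \<times> real \<times> real)
     \<Rightarrow> (real \<Rightarrow> real) \<Rightarrow> (real \<Rightarrow> real) \<Rightarrow> (real \<Rightarrow> real) \<Rightarrow> bool" where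
  "SIQ_solution r \<tau> \<kappa> p \<psi> S I Q \<longleftrightarrow>
     (let \<epsilon> = p * exp (-\<tau>) in
     (\<forall>\<theta>\<in>{-\<tau>-\<kappa>..0}. (S \<theta>, I \<theta>, Q \<theta>) = \<psi> \<theta>) \<and>
     continuous_on {0..} S \<and> continuous_on {0..} I \<and> continuous_on {0..} Q \<and>
     (\<forall>t\<ge>0.
        ((\<lambda>s. - r * S s * I s + I s + r * \<epsilon> * S (s - \<tau> - \<kappa>) * I (s - \<tau> - \<kappa>))
           has_integral (S t - S 0)) {0..t} \<and>
        ((\<lambda>s. r * S s * I s - I s - r * \<epsilon> * S (s - \<tau>) * I (s - \<tau>))
           has_integral (I t - I 0)) {0..t} \<and>
        ((\<lambda>s. r * \<epsilon> * (S (s - \<tau>) * I (s - \<tau>) - S (s - \<tau> - \<kappa>) * I (s - \<tau> - \<kappa>)))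
           has_integral (Q t - Q 0)) {0..t}))"

end

theory Submission
  imports Defs
begin

(*
  The delayed loss term -r eps S(t - tau) I(t - tau) in the equation for I is not controlled
  by I(t) itself.  Subtracting from I the infectives of the last tau time units that are
  destined for quarantine gives
    J(t) = I(t) - r p integral_{t - tau}^{t} exp(theta - t) S(theta) I(theta) dtheta,
  which satisfies the delay-free equation J' = r (1 - p) S I - J, and I >= J as long as
  S I >= 0 in the past; the hypothesis on psi_I(0) says exactly J(0) >= 0.  If S, I, J >= 0
  up to time T, then on [T, T + delta] the largest negative part n of S, I, J can only grow
  at a rate proportional to n, so n <= C delta n and n = 0 once delta is small.  Stepping
  through [0, oo) with this fixed delta gives S, I, J >= 0.  The right-hand sides sum to zero,
  so S + I + Q = 1, and rewriting Q(t) with the hypothesis on psi_Q(0) gives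
  Q(t) >= r eps (integral_{-tau}^{0} S I + integral_{t - tau - kappa}^{t - tau} S I) >= 0.
  A segment x_t is continuous as soon as it only sees the solution on [0, oo), i.e. for
  t >= tau + kappa, and for every t >= 0 if psi itself is continuous.
*)

lemma has_integral_increment:
  fixes h f :: "real \<Rightarrow> real"
  assumes "\<And>t. c \<le> t \<Longrightarrow> (h has_integral (f t - f c)) {c..t}" "c \<le> a" "a \<le> b"
  shows "(h has_integral (f b - f a)) {a..b}"
proof -
  have hb: "(h has_integral (f b - f c)) {c..b}" and ha: "(h has_integral (f a - f c)) {c..a}"
    using assms by auto
  have "integral {c..a} h + integral {a..b} h = integral {c..b} h"
    using Henstock_Kurzweil_Integration.integral_combine[OF _ _ has_integral_integrable[OF hb]] assms
    by auto
  then have "integral {a..b} h = f b - f a"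
    using integral_unique[OF ha] integral_unique[OF hb] by linarith
  moreover have "h integrable_on {a..b}"
    using integrable_subinterval_real[OF has_integral_integrable[OF hb]] assms by auto
  ultimately show ?thesis
    by (metis has_integral_integral)
qed

lemma has_integral_ge_const_real:
  fixes h :: "real \<Rightarrow> real"
  assumes "(h has_integral v) {a..b}" "a \<le> b" "\<And>x. x \<in> {a..b} \<Longrightarrow> m \<le> h x"
  shows "m * (b - a) \<le> v"
  using has_integral_le[OF has_integral_const_real assms(1)] assms(2,3) by (simp add: mult.commute)

lemma last_zero_before_negative:
  fixes u :: "real \<Rightarrow> real"
  assumes "continuous_on {a..b} u" "a \<le> b" "0 \<le> u a" "u b < 0"
  obtains t where "t \<in> {a..b}" "u t = 0" "\<And>x. x \<in> {t..b} \<Longrightarrow> u x \<le> 0"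
proof -
  define Z where "Z = {a..b} \<inter> u -` {0}"
  have closed: "closed Z"
    unfolding Z_def by (rule continuous_closed_preimage[OF assms(1)]) auto
  have nonempty: "Z \<noteq> {}"
    using IVT2'[of u b 0 a] assms unfolding Z_def by auto
  have bounded: "bdd_above Z"
    unfolding Z_def by (auto intro: bdd_aboveI[of _ b])
  have t: "Sup Z \<in> Z"
    using closed_contains_Sup[OF nonempty bounded closed] .
  have upper: "x \<le> Sup Z" if "x \<in> Z" for x
    using cSup_upper[OF that bounded] .
  have nonpos: "u x \<le> 0" if x: "x \<in> {Sup Z..b}" for x
  proof (rule ccontr)
    assume "\<not> u x \<le> 0"
    moreover have "continuous_on {x..b} u"
      using assms(1) t x unfolding Z_def by (auto intro: continuous_on_subset)
    ultimately obtain y where y: "y \<in> {x..b}" "u y = 0"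
      using IVT2'[of u b 0 x] assms x by auto
    then have "y \<in> Z"
      using t x unfolding Z_def by auto
    with upper y x have "x = Sup Z" by fastforce
    with t \<open>\<not> u x \<le> 0\<close> show False unfolding Z_def by auto
  qed
  show ?thesis
    using that[of "Sup Z"] t nonpos unfolding Z_def by blast
qed

lemma neg_le_of_bounded_descent:
  fixes u h :: "real \<Rightarrow> real"
  assumes "continuous_on {a..b} u" "0 \<le> u a" "0 \<le> M"
    and increment: "\<And>t s. a \<le> t \<Longrightarrow> t \<le> s \<Longrightarrow> s \<le> b \<Longrightarrow> (h has_integral (u s - u t)) {t..s}"
    and descent: "\<And>x. x \<in> {a..b} \<Longrightarrow> u x \<le> 0 \<Longrightarrow> - M \<le> h x"
    and s: "s \<in> {a..b}"
  shows "- u s \<le> M * (b - a)"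
proof (cases "0 \<le> u s")
  case True
  moreover have "0 \<le> M * (b - a)" using s \<open>0 \<le> M\<close> by simp
  ultimately show ?thesis by linarith
next
  case False
  have "continuous_on {a..s} u" "a \<le> s" "u s < 0"
    using assms(1) s False by (auto intro: continuous_on_subset)
  then obtain t where t: "t \<in> {a..s}" "u t = 0" and nonpos: "\<And>x. x \<in> {t..s} \<Longrightarrow> u x \<le> 0"
    using last_zero_before_negative[of a s u] assms(2) by blast
  have "- M * (s - t) \<le> u s - u t"
  proof (rule has_integral_ge_const_real[OF increment])
    show "- M \<le> h x" if "x \<in> {t..s}" for x
      using descent[of x] nonpos[OF that] that t s by simp
  qed (use t s in simp_all)
  moreover have "M * (s - t) \<le> M * (b - a)"
    using t s \<open>0 \<le> M\<close> by (intro mult_left_mono) auto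
  ultimately show ?thesis using t by simp
qed

lemma mult_ge_of_bounded_neg_parts:
  fixes x y B n :: real
  assumes "\<bar>x\<bar> \<le> B" "\<bar>y\<bar> \<le> B" "- x \<le> n" "- y \<le> n" "0 \<le> n"
  shows "- (B * n) \<le> x * y"
proof -
  have "0 \<le> B * n" using assms(1,5) by simp
  consider "0 \<le> x * y" | "0 \<le> x" "y < 0" | "x < 0" "0 \<le> y"
    by (metis linorder_not_le mult_nonneg_nonneg mult_nonpos_nonpos less_imp_le)
  then show ?thesis
  proof cases
    case 1
    with \<open>0 \<le> B * n\<close> show ?thesis by linarith
  next
    case 2
    have "x * (- y) \<le> B * n" using 2 assms by (intro mult_mono) auto
    then show ?thesis by simp
  next
    case 3
    have "(- x) * y \<le> n * B" using 3 assms by (intro mult_mono) auto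
    then show ?thesis by (simp add: mult.commute)
  qed
qed

lemma integral_has_real_derivative_at:
  fixes f :: "real \<Rightarrow> real"
  assumes "f integrable_on {a..b}" "x \<in> {a<..<b}" "isCont f x"
  shows "((\<lambda>u. integral {a..u} f) has_real_derivative f x) (at x)"
proof -
  have "((\<lambda>u. integral {a..u} f) has_vector_derivative f x) (at x within {a..b} - {})"
    using assms by (intro integral_has_vector_derivative_continuous_at)
      (auto intro: continuous_at_imp_continuous_within)
  then show ?thesis
    using at_within_Icc_at[of a x b] assms(2)
    by (simp add: has_real_derivative_iff_has_vector_derivative)
qed

lemma has_real_derivative_of_has_integral_increment:
  fixes h f :: "real \<Rightarrow> real"
  assumes "\<And>t. c \<le> t \<Longrightarrow> (h has_integral (f t - f c)) {c..t}" "c < x" "isCont h x"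
  shows "(f has_real_derivative h x) (at x)"
proof -
  have "h integrable_on {c..x+1}"
    using assms(1)[of "x+1"] assms(2) by (auto intro: has_integral_integrable)
  then have "((\<lambda>u. f c + integral {c..u} h) has_real_derivative h x) (at x)"
    using integral_has_real_derivative_at[of h c "x+1" x] assms(2,3)
    by (auto intro!: derivative_eq_intros)
  then show ?thesis
  proof (rule has_field_derivative_transform_within_open[where S = "{c<..}"])
    show "f c + integral {c..u} h = f u" if "u \<in> {c<..}" for u
      using integral_unique[OF assms(1)[of u]] that by simp
  qed (use assms(2) in auto)
qed

lemma integrable_bounded_continuous_off_finite:
  fixes f :: "real \<Rightarrow> real"
  assumes "finite D" "\<And>x. x \<in> {a..b} - D \<Longrightarrow> continuous (at x within {a..b}) f"
    and "\<And>x. x \<in> {a..b} \<Longrightarrow> \<bar>f x\<bar> \<le> B"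
  shows "f integrable_on {a..b}"
proof -
  have spike: "negligible (({a..b} - D - {a..b}) \<union> ({a..b} - ({a..b} - D)))"
    by (rule negligible_subset[OF negligible_finite[OF assms(1)]]) blast
  have "continuous_on ({a..b} - D) f"
    using assms(2) continuous_within_subset[of _ "{a..b}" f "{a..b} - D"]
    by (auto simp: continuous_on_eq_continuous_within)
  moreover have sets: "{a..b} - D \<in> sets lebesgue"
    using assms(1) by (intro sets.Diff) (auto intro: negligible_imp_sets)
  ultimately have "f \<in> borel_measurable (lebesgue_on ({a..b} - D))"
    by (rule continuous_imp_measurable_on_sets_lebesgue)
  moreover have "(\<lambda>x. B) integrable_on {a..b} - D"
    using integrable_spike_set_eq[OF spike] by blast
  ultimately have "f integrable_on {a..b} - D"
    by (rule measurable_bounded_by_integrable_imp_integrable[OF _ _ _ sets]) (use assms(3) in auto)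
  then show ?thesis
    using integrable_spike_set_eq[OF spike] by blast
qed

lemma real_induct_by_steps:
  fixes P :: "real \<Rightarrow> bool"
  assumes "0 < \<delta>" "0 \<le> T" "P 0"
    and step: "\<And>t. 0 \<le> t \<Longrightarrow> t \<le> T \<Longrightarrow> P t \<Longrightarrow> P (t + \<delta>)"
    and down: "\<And>s t. 0 \<le> s \<Longrightarrow> s \<le> t \<Longrightarrow> P t \<Longrightarrow> P s"
  shows "P T"
proof -
  have "P (min T (real k * \<delta>))" for k
  proof (induction k)
    case 0
    then show ?case using assms(2,3) by simp
  next
    case (Suc k)
    show ?case
    proof (cases "real k * \<delta> \<le> T")
      case True
      then have "P (real k * \<delta> + \<delta>)"
        using step Suc.IH assms(1) by (simp add: min_absorb2)
      moreover have "0 \<le> min T (real (Suc k) * \<delta>)" "min T (real (Suc k) * \<delta>) \<le> real k * \<delta> + \<delta>"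
        using assms(1,2) by (auto simp: algebra_simps)
      ultimately show ?thesis using down by blast
    next
      case False
      then show ?thesis using Suc.IH assms(1) by (simp add: min_def algebra_simps)
    qed
  qed
  moreover obtain k where "T < real k * \<delta>"
    using reals_Archimedean3[OF assms(1)] by blast
  ultimately show ?thesis by (metis min.absorb1 less_imp_le)
qed

(* D is the finite exceptional set of the piecewise continuous history. *)
locale SIQ_system =
  fixes r \<tau> \<kappa> p :: real and \<psi> :: "real \<Rightarrow> real \<times> real \<times> real"
    and S I Q :: "real \<Rightarrow> real" and D :: "real set"
  assumes r_pos: "0 < r" and tau_pos: "0 < \<tau>" and kappa_pos: "0 < \<kappa>"
    and p_nonneg: "0 \<le> p" and p_le_one: "p \<le> 1"
    and finite_D: "finite D"
    and psi_continuous: "\<And>x. x \<in> {-\<tau>-\<kappa>..0} - D \<Longrightarrow> continuous (at x within {-\<tau>-\<kappa>..0}) \<psi>"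
    and psi_simplex: "\<And>\<theta>. \<theta> \<in> {-\<tau>-\<kappa>..0} \<Longrightarrow> in_simplex (\<psi> \<theta>)"
    and solution: "SIQ_solution r \<tau> \<kappa> p \<psi> S I Q"
begin

abbreviation \<epsilon> :: real where "\<epsilon> \<equiv> p * exp (- \<tau>)"

definition contact :: "real \<Rightarrow> real" where
  "contact s = S s * I s"

lemma history: "\<theta> \<in> {-\<tau>-\<kappa>..0} \<Longrightarrow> \<psi> \<theta> = (S \<theta>, I \<theta>, Q \<theta>)"
  using solution unfolding SIQ_solution_def Let_def by simp

lemma history_simplex: "\<theta> \<in> {-\<tau>-\<kappa>..0} \<Longrightarrow> in_simplex (S \<theta>, I \<theta>, Q \<theta>)"
  using psi_simplex history by metis

lemma history_bounds:
  assumes "\<theta> \<in> {-\<tau>-\<kappa>..0}"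
  shows "0 \<le> S \<theta>" "S \<theta> \<le> 1" "0 \<le> I \<theta>" "I \<theta> \<le> 1"
  using history_simplex[OF assms] unfolding in_simplex_def by simp_all

lemma continuous_on_SIQ:
  "continuous_on {0..} S" "continuous_on {0..} I" "continuous_on {0..} Q"
  using solution unfolding SIQ_solution_def Let_def by simp_all

lemma S_increment:
  assumes "0 \<le> a" "a \<le> b"
  shows "((\<lambda>s. - r * contact s + I s + r * \<epsilon> * contact (s - \<tau> - \<kappa>)) has_integral (S b - S a)) {a..b}"
proof (rule has_integral_increment[OF _ assms])
  show "((\<lambda>s. - r * contact s + I s + r * \<epsilon> * contact (s - \<tau> - \<kappa>)) has_integral (S t - S 0)) {0..t}"
    if "0 \<le> t" for t
    using solution that unfolding SIQ_solution_def Let_def contact_def by (simp add: mult.assoc)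
qed

lemma I_increment:
  assumes "0 \<le> a" "a \<le> b"
  shows "((\<lambda>s. r * contact s - I s - r * \<epsilon> * contact (s - \<tau>)) has_integral (I b - I a)) {a..b}"
proof (rule has_integral_increment[OF _ assms])
  show "((\<lambda>s. r * contact s - I s - r * \<epsilon> * contact (s - \<tau>)) has_integral (I t - I 0)) {0..t}"
    if "0 \<le> t" for t
    using solution that unfolding SIQ_solution_def Let_def contact_def by (simp add: mult.assoc)
qed

lemma Q_increment:
  assumes "0 \<le> a" "a \<le> b"
  shows "((\<lambda>s. r * \<epsilon> * (contact (s - \<tau>) - contact (s - \<tau> - \<kappa>))) has_integral (Q b - Q a)) {a..b}"
proof (rule has_integral_increment[OF _ assms])
  show "((\<lambda>s. r * \<epsilon> * (contact (s - \<tau>) - contact (s - \<tau> - \<kappa>))) has_integral (Q t - Q 0)) {0..t}"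
    if "0 \<le> t" for t
    using solution that unfolding SIQ_solution_def Let_def contact_def by simp
qed

lemma total_population: "0 \<le> t \<Longrightarrow> S t + I t + Q t = 1"
proof -
  assume t: "0 \<le> t"
  have "((\<lambda>s. (- r * contact s + I s + r * \<epsilon> * contact (s - \<tau> - \<kappa>))
        + (r * contact s - I s - r * \<epsilon> * contact (s - \<tau>))
        + r * \<epsilon> * (contact (s - \<tau>) - contact (s - \<tau> - \<kappa>)))
      has_integral (S t - S 0) + (I t - I 0) + (Q t - Q 0)) {0..t}"
    using has_integral_add[OF has_integral_add[OF S_increment I_increment] Q_increment] t by simp
  moreover have "(\<lambda>s. (- r * contact s + I s + r * \<epsilon> * contact (s - \<tau> - \<kappa>))
        + (r * contact s - I s - r * \<epsilon> * contact (s - \<tau>))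
        + r * \<epsilon> * (contact (s - \<tau>) - contact (s - \<tau> - \<kappa>))) = (\<lambda>s. 0)"
    by (rule ext) algebra
  ultimately have "(S t - S 0) + (I t - I 0) + (Q t - Q 0) = 0"
    using has_integral_unique[OF has_integral_0] by metis
  moreover have "S 0 + I 0 + Q 0 = 1"
    using history_simplex[of 0] tau_pos kappa_pos unfolding in_simplex_def by simp
  ultimately show ?thesis by linarith
qed

lemma isCont_S_I:
  assumes "-\<tau>-\<kappa> < u" "u \<noteq> 0" "u \<notin> D"
  shows "isCont S u \<and> isCont I u"
proof (cases "0 < u")
  case True
  then have "u \<in> interior {0..}" by simp
  then show ?thesis using continuous_on_SIQ continuous_on_interior by blast
next
  case False
  then have "u \<in> {-\<tau>-\<kappa><..<0}" using assms by simp
  then have "isCont \<psi> u"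
    using psi_continuous[of u] at_within_Icc_at[of "-\<tau>-\<kappa>" u 0] assms(3) by simp
  then have "isCont (\<lambda>x. fst (\<psi> x)) u" "isCont (\<lambda>x. fst (snd (\<psi> x))) u"
    by (auto intro!: continuous_intros)
  moreover have "\<forall>\<^sub>F x in nhds u. x \<in> {-\<tau>-\<kappa><..<0}"
    using \<open>u \<in> {-\<tau>-\<kappa><..<0}\<close> by (intro eventually_nhds_in_open) auto
  then have S: "\<forall>\<^sub>F x in nhds u. fst (\<psi> x) = S x" and I: "\<forall>\<^sub>F x in nhds u. fst (snd (\<psi> x)) = I x"
    by (auto elim!: eventually_mono simp: history)
  ultimately show ?thesis using isCont_cong[OF S] isCont_cong[OF I] by simp
qed

lemma isCont_contact: "-\<tau>-\<kappa> < u \<Longrightarrow> u \<noteq> 0 \<Longrightarrow> u \<notin> D \<Longrightarrow> isCont contact u"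
  using isCont_S_I unfolding contact_def[abs_def] by (auto intro!: continuous_intros)

lemma S_I_bounded:
  assumes "0 \<le> X"
  obtains B where "1 \<le> B" "\<And>x. x \<in> {-\<tau>-\<kappa>..X} \<Longrightarrow> \<bar>S x\<bar> \<le> B \<and> \<bar>I x\<bar> \<le> B"
proof -
  have "compact (S ` {0..X})" "compact (I ` {0..X})"
    using continuous_on_SIQ by (auto intro!: compact_continuous_image intro: continuous_on_subset)
  then obtain a1 a2 where a1: "\<forall>y\<in>S ` {0..X}. norm y \<le> a1" and a2: "\<forall>y\<in>I ` {0..X}. norm y \<le> a2"
    using compact_imp_bounded bounded_iff by metis
  define B where "B = max 1 (max a1 a2)"
  have "\<bar>S x\<bar> \<le> B \<and> \<bar>I x\<bar> \<le> B" if x: "x \<in> {-\<tau>-\<kappa>..X}" for x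
  proof (cases "x \<le> 0")
    case True
    then have "x \<in> {-\<tau>-\<kappa>..0}" using x by simp
    from history_bounds[OF this] show ?thesis unfolding B_def by (simp add: le_max_iff_disj)
  next
    case False
    then have "\<bar>S x\<bar> \<le> a1" "\<bar>I x\<bar> \<le> a2" using x a1 a2 by simp_all
    then show ?thesis unfolding B_def by linarith
  qed
  then show ?thesis using that[of B] unfolding B_def by simp
qed

lemma weighted_contact_integrable:
  assumes w: "\<And>x. isCont w x" and "0 \<le> X"
  shows "(\<lambda>\<theta>. w \<theta> * contact \<theta>) integrable_on {-\<tau>-\<kappa>..X}"
proof (rule Henstock_Kurzweil_Integration.integrable_combine[of _ 0])
  have w_on: "continuous_on A w" for A
    using w by (simp add: continuous_at_imp_continuous_on)
  obtain Bw where Bw: "\<And>\<theta>. \<theta> \<in> {-\<tau>-\<kappa>..0} \<Longrightarrow> \<bar>w \<theta>\<bar> \<le> Bw"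
    using compact_imp_bounded[OF compact_continuous_image[OF w_on compact_Icc]]
    unfolding bounded_iff by (metis image_eqI real_norm_def)
  let ?f = "\<lambda>\<theta>. w \<theta> * (fst (\<psi> \<theta>) * fst (snd (\<psi> \<theta>)))"
  have "?f integrable_on {-\<tau>-\<kappa>..0}"
  proof (rule integrable_bounded_continuous_off_finite[OF finite_D])
    show "continuous (at x within {-\<tau>-\<kappa>..0}) ?f" if "x \<in> {-\<tau>-\<kappa>..0} - D" for x
      using psi_continuous[OF that] continuous_at_imp_continuous_within[OF w]
      by (intro continuous_intros) auto
    show "\<bar>?f \<theta>\<bar> \<le> Bw" if "\<theta> \<in> {-\<tau>-\<kappa>..0}" for \<theta>
    proof -
      have "S \<theta> * I \<theta> \<le> 1 * 1"
        using history_bounds[OF that] by (intro mult_mono) auto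
      then have "\<bar>w \<theta>\<bar> * \<bar>S \<theta> * I \<theta>\<bar> \<le> Bw * 1"
        using history_bounds[OF that] Bw[OF that] by (intro mult_mono) auto
      then show ?thesis using history[OF that] by (simp add: abs_mult)
    qed
  qed
  then show "(\<lambda>\<theta>. w \<theta> * contact \<theta>) integrable_on {-\<tau>-\<kappa>..0}"
    by (rule integrable_eq) (simp add: history contact_def)
  show "(\<lambda>\<theta>. w \<theta> * contact \<theta>) integrable_on {0..X}"
    using continuous_on_SIQ w_on unfolding contact_def
    by (intro integrable_continuous_interval continuous_intros) (auto intro: continuous_on_subset)
qed (use tau_pos kappa_pos \<open>0 \<le> X\<close> in simp_all)

definition contact_primitive :: "(real \<Rightarrow> real) \<Rightarrow> real \<Rightarrow> real" where
  "contact_primitive w u = integral {-\<tau>-\<kappa>..u} (\<lambda>\<theta>. w \<theta> * contact \<theta>)"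

lemma contact_primitive_has_integral:
  assumes "\<And>x. isCont w x" "-\<tau>-\<kappa> \<le> a" "a \<le> b"
  shows "((\<lambda>\<theta>. w \<theta> * contact \<theta>) has_integral (contact_primitive w b - contact_primitive w a)) {a..b}"
proof -
  have "(\<lambda>\<theta>. w \<theta> * contact \<theta>) integrable_on {-\<tau>-\<kappa>..max 0 b}"
    using weighted_contact_integrable[OF assms(1)] by simp
  then have int: "(\<lambda>\<theta>. w \<theta> * contact \<theta>) integrable_on {-\<tau>-\<kappa>..b}"
    by (rule integrable_subinterval_real) auto
  then have "contact_primitive w a + integral {a..b} (\<lambda>\<theta>. w \<theta> * contact \<theta>) = contact_primitive w b"
    unfolding contact_primitive_def
    using Henstock_Kurzweil_Integration.integral_combine assms(2,3) by blast
  moreover have "(\<lambda>\<theta>. w \<theta> * contact \<theta>) integrable_on {a..b}"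
    using int by (rule integrable_subinterval_real) (use assms in simp)
  ultimately show ?thesis
    by (metis add_diff_cancel_left' has_integral_integral)
qed

lemma contact_primitive_continuous:
  "(\<And>x. isCont w x) \<Longrightarrow> 0 \<le> X \<Longrightarrow> continuous_on {-\<tau>-\<kappa>..X} (contact_primitive w)"
  unfolding contact_primitive_def[abs_def]
  by (rule indefinite_integral_continuous_1[OF weighted_contact_integrable])

lemma contact_primitive_has_derivative:
  assumes w: "\<And>x. isCont w x" and "-\<tau>-\<kappa> < y" "y \<noteq> 0" "y \<notin> D"
  shows "(contact_primitive w has_real_derivative w y * contact y) (at y)"
proof -
  have "isCont (\<lambda>\<theta>. w \<theta> * contact \<theta>) y"
    by (rule continuous_mult[OF w isCont_contact[OF assms(2-4)]])
  then show ?thesis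
    unfolding contact_primitive_def[abs_def]
    using integral_has_real_derivative_at[OF weighted_contact_integrable[OF w, of "\<bar>y\<bar> + 1"]] assms(2)
    by simp
qed

text \<open>\<open>J t\<close> removes from \<open>I t\<close> the infectives of the last \<open>\<tau>\<close> time units that are destined for
  quarantine; unlike \<open>I\<close>, it obeys the delay-free equation \<open>J' = r (1 - p) S I - J\<close>.\<close>

definition J :: "real \<Rightarrow> real" where
  "J t = I t - r * p * exp (- t) * (contact_primitive exp t - contact_primitive exp (t - \<tau>))"

lemma I_has_derivative:
  assumes "0 < x" "x \<notin> D" "x - \<tau> \<notin> D" "x \<noteq> \<tau>"
  shows "(I has_real_derivative r * contact x - I x - r * \<epsilon> * contact (x - \<tau>)) (at x)"
proof (rule has_real_derivative_of_has_integral_increment[OF I_increment \<open>0 < x\<close>])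
  have "isCont contact x" "isCont I x"
    using isCont_contact[of x] isCont_S_I[of x] assms tau_pos kappa_pos by auto
  moreover have "isCont (\<lambda>s. contact (s - \<tau>)) x"
    using continuous_at_compose[of x "\<lambda>s. s - \<tau>" contact] isCont_contact[of "x - \<tau>"] assms kappa_pos
    by (simp add: o_def)
  ultimately show "isCont (\<lambda>s. r * contact s - I s - r * \<epsilon> * contact (s - \<tau>)) x"
    by (auto intro!: continuous_intros)
qed simp_all

lemma J_has_derivative:
  assumes "0 < x" "x \<notin> D" "x - \<tau> \<notin> D" "x \<noteq> \<tau>"
  shows "(J has_real_derivative r * (1 - p) * contact x - J x) (at x)"
proof -
  let ?P = "contact_primitive exp"
  have P_now: "(?P has_real_derivative exp x * contact x) (at x)"
    using contact_primitive_has_derivative[OF isCont_exp, of x] assms tau_pos kappa_pos by simp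
  have "((\<lambda>t. ?P (t + - \<tau>)) has_real_derivative exp (x - \<tau>) * contact (x - \<tau>)) (at x)"
    by (rule DERIV_shift[THEN iffD1])
      (use contact_primitive_has_derivative[OF isCont_exp, of "x - \<tau>"] assms kappa_pos in simp)
  then have P_delayed: "((\<lambda>t. ?P (t - \<tau>)) has_real_derivative exp (x - \<tau>) * contact (x - \<tau>)) (at x)"
    by simp
  have exp_neg: "((\<lambda>t. exp (- t)) has_real_derivative - exp (- x)) (at x)"
    by (auto intro!: derivative_eq_intros)
  have "(exp x * contact x - exp (x - \<tau>) * contact (x - \<tau>)) * (r * p * exp (- x))
      = r * p * ((exp (- x) * exp x) * contact x - (exp (- x) * exp (x - \<tau>)) * contact (x - \<tau>))"
    by algebra
  also have "\<dots> = r * p * contact x - r * \<epsilon> * contact (x - \<tau>)"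
    by (simp add: algebra_simps flip: exp_add)
  finally have rate: "r * contact x - I x - r * \<epsilon> * contact (x - \<tau>)
      - (r * p * - exp (- x) * (?P x - ?P (x - \<tau>))
         + (exp x * contact x - exp (x - \<tau>) * contact (x - \<tau>)) * (r * p * exp (- x)))
      = r * (1 - p) * contact x - J x"
    unfolding J_def by algebra
  have "(J has_real_derivative r * contact x - I x - r * \<epsilon> * contact (x - \<tau>)
      - (r * p * - exp (- x) * (?P x - ?P (x - \<tau>))
         + (exp x * contact x - exp (x - \<tau>) * contact (x - \<tau>)) * (r * p * exp (- x)))) (at x)"
    unfolding J_def[abs_def]
    by (rule DERIV_diff[OF I_has_derivative[OF assms]
        DERIV_mult[OF DERIV_cmult[OF exp_neg, where c = "r * p"] DERIV_diff[OF P_now P_delayed]]])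
  from this rate show ?thesis
    by (rule DERIV_cong)
qed

lemma J_continuous: "0 \<le> X \<Longrightarrow> continuous_on {0..X} J"
proof -
  assume "0 \<le> X"
  have P: "continuous_on {-\<tau>-\<kappa>..X} (contact_primitive exp)"
    using contact_primitive_continuous[OF isCont_exp \<open>0 \<le> X\<close>] .
  have "continuous_on {0..X} (contact_primitive exp)"
    using P by (rule continuous_on_subset) (use tau_pos kappa_pos in auto)
  moreover have "continuous_on {0..X} (\<lambda>t. contact_primitive exp (t - \<tau>))"
    by (rule continuous_on_compose2[OF P, of _ "\<lambda>t. t - \<tau>"])
      (use tau_pos kappa_pos in \<open>auto intro!: continuous_intros\<close>)
  moreover have "continuous_on {0..X} I"
    using continuous_on_SIQ(2) by (rule continuous_on_subset) auto
  ultimately show ?thesis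
    unfolding J_def[abs_def] by (intro continuous_intros)
qed

lemma J_increment:
  assumes "0 \<le> a" "a \<le> b"
  shows "((\<lambda>x. r * (1 - p) * contact x - J x) has_integral (J b - J a)) {a..b}"
proof (rule fundamental_theorem_of_calculus_interior_strong[of "insert \<tau> (D \<union> (\<lambda>d. d + \<tau>) ` D)"])
  show "(J has_vector_derivative r * (1 - p) * contact x - J x) (at x)"
    if x: "x \<in> {a<..<b} - insert \<tau> (D \<union> (\<lambda>d. d + \<tau>) ` D)" for x
  proof -
    have "x - \<tau> \<notin> D"
      using x by (metis DiffD2 UnI2 diff_add_cancel image_eqI insertCI)
    then show ?thesis
      using J_has_derivative[of x] x assms by (simp add: has_real_derivative_iff_has_vector_derivative)
  qed
  have "continuous_on {0..b} J"
    using assms by (intro J_continuous) simp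
  then show "continuous_on {a..b} J"
    by (rule continuous_on_subset) (use assms in auto)
qed (use finite_D assms in simp_all)

definition nonneg_upto :: "real \<Rightarrow> bool" where
  "nonneg_upto t \<longleftrightarrow> (\<forall>s\<in>{0..t}. 0 \<le> S s \<and> 0 \<le> I s \<and> 0 \<le> J s)"

lemma contact_nonneg_upto:
  assumes "nonneg_upto T" "s \<in> {-\<tau>-\<kappa>..T}"
  shows "0 \<le> contact s"
proof (cases "s \<le> 0")
  case True
  then show ?thesis using assms(2) history_bounds[of s] by (simp add: contact_def)
next
  case False
  then show ?thesis using assms unfolding nonneg_upto_def contact_def by simp
qed

(* T1 \<le> T0 + \<tau> puts the delayed arguments of all points of [T0, T1] into [-\<tau>-\<kappa>, T0],
   where S I \<ge> 0. *)
context
  fixes T0 T1 B n :: real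
  assumes T0_nonneg: "0 \<le> T0" and T0_le_T1: "T0 \<le> T1" and T1_le: "T1 \<le> T0 + \<tau>"
    and nonneg_T0: "nonneg_upto T0"
    and bounded: "\<forall>x\<in>{-\<tau>-\<kappa>..T1}. \<bar>S x\<bar> \<le> B \<and> \<bar>I x\<bar> \<le> B"
    and n_nonneg: "0 \<le> n"
    and neg_le_n: "\<forall>s\<in>{T0..T1}. - S s \<le> n \<and> - I s \<le> n"
begin

lemma window_B_nonneg: "0 \<le> B"
  using bounded T0_nonneg T0_le_T1 tau_pos kappa_pos by force

lemma window_bounds: "x \<in> {T0..T1} \<Longrightarrow> \<bar>S x\<bar> \<le> B \<and> \<bar>I x\<bar> \<le> B \<and> - S x \<le> n \<and> - I x \<le> n"
  using bounded neg_le_n T0_nonneg tau_pos kappa_pos by simp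

lemma window_contact_ge: "x \<in> {T0..T1} \<Longrightarrow> - (B * n) \<le> contact x"
  unfolding contact_def using window_bounds n_nonneg by (intro mult_ge_of_bounded_neg_parts) auto

lemma window_neg_S_le: "s \<in> {T0..T1} \<Longrightarrow> - S s \<le> (r * B + 1) * n * (T1 - T0)"
proof (rule neg_le_of_bounded_descent[where u = S and a = T0 and b = T1 and M = "(r * B + 1) * n"
      and h = "\<lambda>s. - r * contact s + I s + r * \<epsilon> * contact (s - \<tau> - \<kappa>)"])
  show "- ((r * B + 1) * n) \<le> - r * contact x + I x + r * \<epsilon> * contact (x - \<tau> - \<kappa>)"
    if x: "x \<in> {T0..T1}" and "S x \<le> 0" for x
  proof -
    have "- (B * n) \<le> (- S x) * I x"
      using window_bounds[OF x] \<open>S x \<le> 0\<close> n_nonneg by (intro mult_ge_of_bounded_neg_parts) auto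
    then have "- (r * B * n) \<le> - r * contact x"
      using r_pos unfolding contact_def
      by (metis minus_mult_left minus_mult_right mult.assoc mult_left_mono less_imp_le)
    moreover have "0 \<le> contact (x - \<tau> - \<kappa>)"
      using contact_nonneg_upto[OF nonneg_T0] x T0_nonneg T1_le kappa_pos by simp
    then have "0 \<le> r * \<epsilon> * contact (x - \<tau> - \<kappa>)"
      using r_pos p_nonneg by simp
    ultimately show ?thesis
      using window_bounds[OF x] by (simp add: algebra_simps)
  qed
  show "((\<lambda>s. - r * contact s + I s + r * \<epsilon> * contact (s - \<tau> - \<kappa>)) has_integral (S s' - S t)) {t..s'}"
    if "T0 \<le> t" "t \<le> s'" for t s'
    using S_increment that T0_nonneg by simp
  show "continuous_on {T0..T1} S"
    using continuous_on_SIQ(1) by (rule continuous_on_subset) (use T0_nonneg in auto)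
qed (use T0_nonneg nonneg_T0 window_B_nonneg n_nonneg r_pos in \<open>simp_all add: nonneg_upto_def\<close>)

lemma window_neg_J_le: "s \<in> {T0..T1} \<Longrightarrow> - J s \<le> r * B * n * (T1 - T0)"
proof (rule neg_le_of_bounded_descent[where u = J and a = T0 and b = T1 and M = "r * B * n"
      and h = "\<lambda>x. r * (1 - p) * contact x - J x"])
  show "- (r * B * n) \<le> r * (1 - p) * contact x - J x" if x: "x \<in> {T0..T1}" and "J x \<le> 0" for x
  proof -
    have "(1 - p) * - (B * n) \<le> (1 - p) * contact x"
      using window_contact_ge[OF x] p_le_one by (intro mult_left_mono) auto
    moreover have "- (B * n) \<le> (1 - p) * - (B * n)"
      using p_nonneg window_B_nonneg n_nonneg by (simp add: algebra_simps)
    ultimately have "- (B * n) \<le> (1 - p) * contact x" by linarith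
    then have "r * - (B * n) \<le> r * ((1 - p) * contact x)"
      using r_pos by (intro mult_left_mono) auto
    then show ?thesis using \<open>J x \<le> 0\<close> by (simp add: algebra_simps)
  qed
  show "((\<lambda>x. r * (1 - p) * contact x - J x) has_integral (J s' - J t)) {t..s'}"
    if "T0 \<le> t" "t \<le> s'" for t s'
    using J_increment that T0_nonneg by simp
  show "continuous_on {T0..T1} J"
    using J_continuous[of T1] T0_nonneg T0_le_T1 continuous_on_subset[of "{0..T1}" J "{T0..T1}"] by simp
qed (use T0_nonneg nonneg_T0 window_B_nonneg n_nonneg r_pos in \<open>simp_all add: nonneg_upto_def\<close>)

lemma window_J_le_I: "s \<in> {T0..T1} \<Longrightarrow> J s - r * B * n * (T1 - T0) \<le> I s"
proof -
  assume s: "s \<in> {T0..T1}"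
  let ?P = "contact_primitive exp"
  have "0 \<le> ?P T0 - ?P (s - \<tau>)"
  proof (rule has_integral_nonneg[OF contact_primitive_has_integral[OF isCont_exp]])
    show "0 \<le> exp x * contact x" if "x \<in> {s - \<tau>..T0}" for x
      using contact_nonneg_upto[OF nonneg_T0, of x] that s T0_nonneg kappa_pos by simp
  qed (use s T1_le kappa_pos T0_nonneg in simp_all)
  moreover have "- (exp s * (B * n)) * (s - T0) \<le> ?P s - ?P T0"
  proof (rule has_integral_ge_const_real[OF contact_primitive_has_integral[OF isCont_exp]])
    show "- (exp s * (B * n)) \<le> exp x * contact x" if x: "x \<in> {T0..s}" for x
    proof -
      have "exp x * - (B * n) \<le> exp x * contact x"
        using window_contact_ge[of x] x s by (intro mult_left_mono) auto
      moreover have "exp x * (B * n) \<le> exp s * (B * n)"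
        using x window_B_nonneg n_nonneg by (intro mult_right_mono) auto
      ultimately show ?thesis by simp
    qed
  qed (use s T0_nonneg tau_pos kappa_pos in simp_all)
  moreover have "exp s * (B * n) * (s - T0) \<le> exp s * (B * n) * (T1 - T0)"
    using s window_B_nonneg n_nonneg by (intro mult_left_mono) auto
  ultimately have "- (exp s * (B * n) * (T1 - T0)) \<le> ?P s - ?P (s - \<tau>)"
    unfolding mult_minus_left by linarith
  then have "r * p * exp (- s) * - (exp s * (B * n) * (T1 - T0)) \<le> r * p * exp (- s) * (?P s - ?P (s - \<tau>))"
    using r_pos p_nonneg by (intro mult_left_mono) auto
  moreover have "r * p * exp (- s) * - (exp s * (B * n) * (T1 - T0)) = - (p * (r * B * n * (T1 - T0)))"
    by (simp add: algebra_simps flip: exp_add)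
  moreover have "p * (r * B * n * (T1 - T0)) \<le> r * B * n * (T1 - T0)"
    using p_nonneg p_le_one r_pos window_B_nonneg n_nonneg T0_le_T1
    by (intro mult_left_le_one_le) auto
  ultimately show ?thesis unfolding J_def by linarith
qed

end

lemma nonneg_upto_step:
  assumes "0 \<le> T0" "0 < \<delta>" "\<delta> \<le> \<tau>" "nonneg_upto T0"
    and bounded: "\<And>x. x \<in> {-\<tau>-\<kappa>..T0 + \<delta>} \<Longrightarrow> \<bar>S x\<bar> \<le> B \<and> \<bar>I x\<bar> \<le> B"
    and small: "(2 * r * B + 1) * \<delta> < 1"
  shows "nonneg_upto (T0 + \<delta>)"
proof -
  define neg where "neg s = max 0 (max (- S s) (max (- I s) (- J s)))" for s
  have window: "T0 \<le> T0 + \<delta>" "T0 + \<delta> \<le> T0 + \<tau>" "{T0..T0 + \<delta>} \<subseteq> {0..T0 + \<delta>}"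
    using assms(1-3) by auto
  have "continuous_on {T0..T0 + \<delta>} S" "continuous_on {T0..T0 + \<delta>} I" "continuous_on {T0..T0 + \<delta>} J"
    using continuous_on_subset[OF continuous_on_SIQ(1)] continuous_on_subset[OF continuous_on_SIQ(2)]
      continuous_on_subset[OF J_continuous window(3)] assms(1,2) by auto
  then have neg_continuous: "continuous_on {T0..T0 + \<delta>} neg"
    unfolding neg_def by (intro continuous_intros)
  have "\<exists>x\<in>{T0..T0 + \<delta>}. \<forall>y\<in>{T0..T0 + \<delta>}. neg y \<le> neg x"
    by (rule continuous_attains_sup[OF compact_Icc _ neg_continuous]) (use window(1) in simp)
  then obtain sm where sm: "sm \<in> {T0..T0 + \<delta>}" and max: "\<And>s. s \<in> {T0..T0 + \<delta>} \<Longrightarrow> neg s \<le> neg sm"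
    by blast
  define n where "n = neg sm"
  have n_nonneg: "0 \<le> n" unfolding n_def neg_def by simp
  have neg_le_n: "- S s \<le> n \<and> - I s \<le> n \<and> - J s \<le> n" if "s \<in> {T0..T0 + \<delta>}" for s
    using max[OF that] unfolding n_def neg_def by linarith
  then have neg_SI_le_n: "\<forall>s\<in>{T0..T0 + \<delta>}. - S s \<le> n \<and> - I s \<le> n"
    by blast
  have bounded_ball: "\<forall>x\<in>{-\<tau>-\<kappa>..T0 + \<delta>}. \<bar>S x\<bar> \<le> B \<and> \<bar>I x\<bar> \<le> B"
    using bounded by blast
  note window_facts = window_neg_S_le window_neg_J_le window_J_le_I window_B_nonneg
  note window_lemmas = window_facts[OF assms(1) window(1,2) assms(4) bounded_ball n_nonneg neg_SI_le_n]
  have "- S sm \<le> r * B * n * \<delta> + n * \<delta>" "- J sm \<le> r * B * n * \<delta>" "J sm - r * B * n * \<delta> \<le> I sm"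
    using window_lemmas(1-3)[OF sm] by (simp_all add: algebra_simps)
  moreover have "0 \<le> n * \<delta>" "0 \<le> r * B * n * \<delta>"
    using window_lemmas(4) r_pos n_nonneg assms(2) by simp_all
  moreover have "(2 * r * B + 1) * \<delta> * n = 2 * (r * B * n * \<delta>) + n * \<delta>"
    by (simp add: algebra_simps)
  ultimately have "n \<le> (2 * r * B + 1) * \<delta> * n"
    unfolding n_def neg_def max.bounded_iff by (intro conjI; linarith)
  have "n = 0"
  proof (rule ccontr)
    assume "n \<noteq> 0"
    with n_nonneg have "(2 * r * B + 1) * \<delta> * n < 1 * n"
      by (intro mult_strict_right_mono[OF small]) simp
    with \<open>n \<le> (2 * r * B + 1) * \<delta> * n\<close> show False by simp
  qed
  show ?thesis
    unfolding nonneg_upto_def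
  proof
    fix s assume s: "s \<in> {0..T0 + \<delta>}"
    show "0 \<le> S s \<and> 0 \<le> I s \<and> 0 \<le> J s"
    proof (cases "s \<le> T0")
      case True
      then show ?thesis using assms(4) s unfolding nonneg_upto_def by simp
    next
      case False
      then show ?thesis using neg_le_n[of s] \<open>n = 0\<close> s by simp
    qed
  qed
qed

lemma solution_continuous: "continuous_on {0..} (\<lambda>u. (S u, I u, Q u))"
  using continuous_on_SIQ by (intro continuous_on_Pair)

lemma solution_continuous_from_history:
  assumes "continuous_on {-\<tau>-\<kappa>..0} \<psi>"
  shows "continuous_on {-\<tau>-\<kappa>..} (\<lambda>u. (S u, I u, Q u))"
proof -
  have "continuous_on {-\<tau>-\<kappa>..0} (\<lambda>u. (S u, I u, Q u))"
    by (rule continuous_on_eq[OF assms]) (simp add: history)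
  then have "continuous_on ({-\<tau>-\<kappa>..0} \<union> {0..}) (\<lambda>u. (S u, I u, Q u))"
    using solution_continuous by (intro continuous_on_closed_Un) simp_all
  moreover have "{-\<tau>-\<kappa>..0} \<union> {0..} = {-\<tau>-\<kappa>::real..}"
    using tau_pos kappa_pos by auto
  ultimately show ?thesis by simp
qed

end

locale SIQ_admissible = SIQ_system +
  assumes I_init:
      "r * p * integral {-\<tau>..0} (\<lambda>\<theta>. exp \<theta> * fst (\<psi> \<theta>) * fst (snd (\<psi> \<theta>))) \<le> fst (snd (\<psi> 0))"
    and Q_init:
      "r * (p * exp (- \<tau>)) * integral {-\<tau>-\<kappa>..0} (\<lambda>\<theta>. fst (\<psi> \<theta>) * fst (snd (\<psi> \<theta>)))
         \<le> snd (snd (\<psi> 0))"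
begin

lemma J_0_nonneg: "0 \<le> J 0"
proof -
  have "((\<lambda>\<theta>. exp \<theta> * contact \<theta>) has_integral
      (contact_primitive exp 0 - contact_primitive exp (- \<tau>))) {-\<tau>..0}"
    by (rule contact_primitive_has_integral[OF isCont_exp]) (use tau_pos kappa_pos in simp_all)
  moreover have "integral {-\<tau>..0} (\<lambda>\<theta>. exp \<theta> * contact \<theta>)
      = integral {-\<tau>..0} (\<lambda>\<theta>. exp \<theta> * fst (\<psi> \<theta>) * fst (snd (\<psi> \<theta>)))"
    by (rule integral_cong) (use kappa_pos in \<open>simp add: history contact_def\<close>)
  ultimately have "contact_primitive exp 0 - contact_primitive exp (- \<tau>)
      = integral {-\<tau>..0} (\<lambda>\<theta>. exp \<theta> * fst (\<psi> \<theta>) * fst (snd (\<psi> \<theta>)))"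
    using integral_unique by metis
  moreover have "I 0 = fst (snd (\<psi> 0))"
    using history[of 0] tau_pos kappa_pos by simp
  ultimately show ?thesis
    using I_init unfolding J_def by simp
qed

lemma nonneg_upto: "0 \<le> T \<Longrightarrow> nonneg_upto T"
proof -
  assume "0 \<le> T"
  then have "0 \<le> T + \<tau>" using tau_pos by simp
  then obtain B where "1 \<le> B" and bounded: "\<And>x. x \<in> {-\<tau>-\<kappa>..T + \<tau>} \<Longrightarrow> \<bar>S x\<bar> \<le> B \<and> \<bar>I x\<bar> \<le> B"
    by (rule S_I_bounded) blast
  define c where "c = 2 * r * B + 1"
  define \<delta> where "\<delta> = min \<tau> (1 / (2 * c))"
  have "1 \<le> c" unfolding c_def using r_pos \<open>1 \<le> B\<close> by simp
  then have \<delta>: "0 < \<delta>" "\<delta> \<le> \<tau>" "c * \<delta> < 1"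
    unfolding \<delta>_def using tau_pos by (auto simp: min_def field_simps)
  show "nonneg_upto T"
  proof (rule real_induct_by_steps[OF \<delta>(1) \<open>0 \<le> T\<close>])
    show "nonneg_upto 0"
      using J_0_nonneg history_bounds[of 0] tau_pos kappa_pos unfolding nonneg_upto_def by simp
    show "nonneg_upto (t + \<delta>)" if "0 \<le> t" "t \<le> T" "nonneg_upto t" for t
    proof (rule nonneg_upto_step[OF that(1) \<delta>(1,2) that(3)])
      show "\<bar>S x\<bar> \<le> B \<and> \<bar>I x\<bar> \<le> B" if "x \<in> {-\<tau>-\<kappa>..t + \<delta>}" for x
        using bounded[of x] that \<open>t \<le> T\<close> \<delta>(2) by simp
    qed (use \<delta>(3) c_def in simp)
    show "nonneg_upto s" if "0 \<le> s" "s \<le> t" "nonneg_upto t" for s t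
      using that unfolding nonneg_upto_def by simp
  qed
qed

lemma S_I_nonneg: "0 \<le> t \<Longrightarrow> 0 \<le> S t \<and> 0 \<le> I t"
  using nonneg_upto[of t] unfolding nonneg_upto_def by simp

lemma contact_nonneg: "-\<tau>-\<kappa> \<le> s \<Longrightarrow> 0 \<le> contact s"
  using contact_nonneg_upto[OF nonneg_upto[of "max 0 s"]] by simp

lemma Q_nonneg: "0 \<le> t \<Longrightarrow> 0 \<le> Q t"
proof -
  assume t: "0 \<le> t"
  let ?G = "contact_primitive (\<lambda>_. 1)"
  have G_int: "(contact has_integral (?G b - ?G a)) {a..b}" if "-\<tau>-\<kappa> \<le> a" "a \<le> b" for a b
    using contact_primitive_has_integral[of "\<lambda>_. 1"] that by simp
  have G_mono: "?G a \<le> ?G b" if "-\<tau>-\<kappa> \<le> a" "a \<le> b" for a b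
    using has_integral_nonneg[OF G_int[OF that]] contact_nonneg that by simp
  have delayed: "((\<lambda>s. contact (s - c)) has_integral (?G (t - c) - ?G (- c))) {0..t}"
    if "c \<le> \<tau> + \<kappa>" for c
    using has_integral_shift_real_ivl[OF G_int[of "- c" "t - c"], of "- c"] that t by simp
  have "((\<lambda>s. contact (s - \<tau>)) has_integral (?G (t - \<tau>) - ?G (- \<tau>))) {0..t}"
    using delayed[of \<tau>] kappa_pos by simp
  moreover have "((\<lambda>s. contact (s - \<tau> - \<kappa>)) has_integral (?G (t - \<tau> - \<kappa>) - ?G (- \<tau> - \<kappa>))) {0..t}"
    using delayed[of "\<tau> + \<kappa>"] by (simp add: diff_diff_eq)
  ultimately have Q_t: "Q t - Q 0 = r * \<epsilon> * ((?G (t - \<tau>) - ?G (- \<tau>)) - (?G (t - \<tau> - \<kappa>) - ?G (- \<tau> - \<kappa>)))"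
    by (intro has_integral_unique[OF Q_increment[OF order_refl t]] has_integral_mult_right has_integral_diff)
  have "integral {-\<tau>-\<kappa>..0} contact = integral {-\<tau>-\<kappa>..0} (\<lambda>\<theta>. fst (\<psi> \<theta>) * fst (snd (\<psi> \<theta>)))"
    by (rule integral_cong) (simp add: history contact_def)
  then have Q_0: "r * \<epsilon> * (?G 0 - ?G (- \<tau> - \<kappa>)) \<le> Q 0"
    using Q_init integral_unique[OF G_int[of "-\<tau>-\<kappa>" 0]] history[of 0] tau_pos kappa_pos by simp
  have "0 \<le> ?G 0 - ?G (- \<tau>)" "0 \<le> ?G (t - \<tau>) - ?G (t - \<tau> - \<kappa>)"
    using G_mono[of "- \<tau>" 0] G_mono[of "t - \<tau> - \<kappa>" "t - \<tau>"] t tau_pos kappa_pos by simp_all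
  then have "0 \<le> r * \<epsilon> * ((?G 0 - ?G (- \<tau>)) + (?G (t - \<tau>) - ?G (t - \<tau> - \<kappa>)))"
    using r_pos p_nonneg by simp
  moreover have "Q t = (Q 0 - r * \<epsilon> * (?G 0 - ?G (- \<tau> - \<kappa>)))
      + r * \<epsilon> * ((?G 0 - ?G (- \<tau>)) + (?G (t - \<tau>) - ?G (t - \<tau> - \<kappa>)))"
    using Q_t by (simp add: algebra_simps)
  ultimately show ?thesis using Q_0 by linarith
qed

lemma solution_simplex:
  assumes "-\<tau>-\<kappa> \<le> u"
  shows "in_simplex (S u, I u, Q u)"
proof (cases "u \<le> 0")
  case True
  then show ?thesis using history_simplex assms by simp
next
  case False
  then show ?thesis
    using S_I_nonneg[of u] Q_nonneg[of u] total_population[of u] unfolding in_simplex_def by simp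
qed

lemma segment_in_Ctilde:
  assumes "0 \<le> t" "continuous_on {t-\<tau>-\<kappa>..t} (\<lambda>u. (S u, I u, Q u))"
  shows "Ctilde \<tau> \<kappa> (\<lambda>\<theta>. (S (t + \<theta>), I (t + \<theta>), Q (t + \<theta>)))"
  unfolding Ctilde_def
proof
  show "continuous_on {-\<tau>-\<kappa>..0} (\<lambda>\<theta>. (S (t + \<theta>), I (t + \<theta>), Q (t + \<theta>)))"
    by (rule continuous_on_compose2[OF assms(2), of _ "\<lambda>\<theta>. t + \<theta>"]) (auto intro!: continuous_intros)
  show "\<forall>\<theta>\<in>{-\<tau>-\<kappa>..0}. in_simplex (S (t + \<theta>), I (t + \<theta>), Q (t + \<theta>))"
    using solution_simplex assms(1) by simp
qed

end

theorem lemma1: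
  fixes r \<tau> \<kappa> p :: real
    and \<psi> :: "real \<Rightarrow> real \<times> real \<times> real"
    and S I Q :: "real \<Rightarrow> real"
  assumes "r > 0" and "\<tau> > 0" and "\<kappa> > 0" and "0 \<le> p" and "p \<le> 1"
    and "piecewise_continuous_on (-\<tau>-\<kappa>) 0 \<psi>"
    and "\<forall>\<theta>\<in>{-\<tau>-\<kappa>..0}. in_simplex (\<psi> \<theta>)"
    and "fst (snd (\<psi> 0)) \<ge>
           r * p * integral {-\<tau>..0} (\<lambda>\<theta>. exp \<theta> * fst (\<psi> \<theta>) * fst (snd (\<psi> \<theta>)))"
    and "snd (snd (\<psi> 0)) \<ge>
           r * (p * exp (-\<tau>)) * integral {-\<tau>-\<kappa>..0} (\<lambda>\<theta>. fst (\<psi> \<theta>) * fst (snd (\<psi> \<theta>)))"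
    and "SIQ_solution r \<tau> \<kappa> p \<psi> S I Q"
  shows "(\<forall>t\<ge>0. S t \<ge> 0 \<and> I t \<ge> 0 \<and> Q t \<ge> 0 \<and> S t + I t + Q t = 1)
       \<and> (\<forall>t\<ge>\<tau>+\<kappa>. Ctilde \<tau> \<kappa> (\<lambda>\<theta>. (S (t+\<theta>), I (t+\<theta>), Q (t+\<theta>))))
       \<and> (Ctilde \<tau> \<kappa> \<psi> \<longrightarrow> (\<forall>t\<ge>0. Ctilde \<tau> \<kappa> (\<lambda>\<theta>. (S (t+\<theta>), I (t+\<theta>), Q (t+\<theta>)))))"
proof -
  obtain D where "finite D" "\<forall>x\<in>{-\<tau>-\<kappa>..0} - D. continuous (at x within {-\<tau>-\<kappa>..0}) \<psi>"
    using assms(6) unfolding piecewise_continuous_on_def by blast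
  then interpret SIQ_admissible r \<tau> \<kappa> p \<psi> S I Q D
    by unfold_locales (use assms in simp_all)
  have late_segment: "Ctilde \<tau> \<kappa> (\<lambda>\<theta>. (S (t+\<theta>), I (t+\<theta>), Q (t+\<theta>)))" if "\<tau> + \<kappa> \<le> t" for t
  proof (rule segment_in_Ctilde)
    show "0 \<le> t" using that tau_pos kappa_pos by simp
    show "continuous_on {t-\<tau>-\<kappa>..t} (\<lambda>u. (S u, I u, Q u))"
      by (rule continuous_on_subset[OF solution_continuous]) (use that in auto)
  qed
  have segment_if_continuous_history: "Ctilde \<tau> \<kappa> (\<lambda>\<theta>. (S (t+\<theta>), I (t+\<theta>), Q (t+\<theta>)))"
    if "Ctilde \<tau> \<kappa> \<psi>" "0 \<le> t" for t
  proof (rule segment_in_Ctilde[OF that(2)])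
    show "continuous_on {t-\<tau>-\<kappa>..t} (\<lambda>u. (S u, I u, Q u))"
      using that unfolding Ctilde_def
      by (intro continuous_on_subset[OF solution_continuous_from_history]) auto
  qed
  show ?thesis
    using S_I_nonneg Q_nonneg total_population late_segment segment_if_continuous_history by simp
qed

end
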